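(* For all $0\le t<1$, $$\lim_{x\downarrow C^*\sqrt{1-t}}\frac{\partial}{\partial x}V^*(t,x)=\lim_{x\uparrow C^*\sqrt{1-t}}\frac{\partial}{\partial x}f(t,x),$$ where $$V^*(t,x)=\begin{cases}\sqrt{1-t}\,\sqrt{2\pi}\,\Phi(-x/\sqrt{1-t})e^{x^2/(2(1-t))}v(C^* ), & x>C^*\sqrt{1-t},\\ f(t,x), & x\le C^*\sqrt{1-t}.\end{cases}$$
   Context: $\Phi$ is the standard normal distribution function. $B^*\approx0.84$ is the unique positive solution of $\sqrt{2\pi}(1-B^2)e^{B^2/2}\Phi(B)=B$. Define $U(t,x)=\sqrt{2\pi(1-t)}(1-(B^* )^2)e^{x^2/(2(1-t))}\Phi(x/\sqrt{1-t})$ for $x<B^*\sqrt{1-t}$, and $U(t,x)=x$ otherwise. Set $f(t,x)=U(t,x)-x$. For $C\le B^*$ let $v(C)=\frac{1}{\Phi(-C)}[(1-(B^* )^2)\Phi(C)-Ce^{-C^2/2}/\sqrt{2\pi}]$ and $u(C)=1-(B^* )^2-(1-C^2)\Phi(-C)-\frac{C}{\sqrt{2\pi}}e^{-C^2/2}$. $C^*$ is the unique negative zero of $u$. *)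

theory Defs
  imports "HOL-Probability.Probability"
begin

definition Phi :: "real \<Rightarrow> real" where
  "Phi x = (LBINT y:{..x}. std_normal_density y)"

definition B_star :: real where
  "B_star = (THE B. B > 0 \<and> sqrt (2*pi) * (1 - B\<^sup>2) * exp (B\<^sup>2/2) * Phi B = B)"

definition U :: "real \<Rightarrow> real \<Rightarrow> real" where
  "U t x = (if x < B_star * sqrt (1 - t)
            then sqrt (2*pi*(1-t)) * (1 - B_star\<^sup>2) * exp (x\<^sup>2 / (2*(1-t))) * Phi (x / sqrt (1-t))
            else x)"

definition f :: "real \<Rightarrow> real \<Rightarrow> real" where
  "f t x = U t x - x"

definition v :: "real \<Rightarrow> real" where
  "v C = (1 / Phi (-C)) * ((1 - B_star\<^sup>2) * Phi C - C * exp (-(C\<^sup>2)/2) / sqrt (2*pi))"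

definition u :: "real \<Rightarrow> real" where
  "u C = 1 - B_star\<^sup>2 - (1 - C\<^sup>2) * Phi (-C) - C / sqrt (2*pi) * exp (-(C\<^sup>2)/2)"

definition C_star :: real where
  "C_star = (THE C. C < 0 \<and> u C = 0)"

definition V_star :: "real \<Rightarrow> real \<Rightarrow> real" where
  "V_star t x = (if x > C_star * sqrt (1 - t)
     then sqrt (1-t) * sqrt (2*pi) * Phi (-x / sqrt (1-t)) * exp (x\<^sup>2 / (2*(1-t))) * v C_star
     else f t x)"

end

theory Submission
  imports Defs
begin

text \<open>
  With \<open>s = \<surd>(1 - t)\<close>, both \<open>V\<^sup>*(t, \<cdot>)\<close> and \<open>f(t, \<cdot>)\<close> near \<open>C\<^sup>* s\<close> are of the form
  \<open>x \<mapsto> s g(x/s)\<close>, whose derivative is \<open>g'(x/s)\<close>; so the time variable drops out and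
  the claim becomes the equality of the derivatives of two fixed profiles at \<open>C\<^sup>*\<close>.
  Writing \<open>\<psi>(z) = \<surd>(2\<pi>) exp(z\<^sup>2/2)\<close>, so that \<open>\<psi> \<phi> = 1\<close>, this equality is a linear
  identity in \<open>\<Phi>(\<plusminus>C\<^sup>*)\<close> and \<open>\<phi>(C\<^sup>*)\<close> that follows from \<open>u(C\<^sup>*) = 0\<close> and the definition of
  \<open>v\<close>. The rest is the existence of \<open>B\<^sup>*\<close> and \<open>C\<^sup>*\<close>, by the intermediate value theorem
  and strict monotonicity, so that the definite descriptions denote what they should.
\<close>

abbreviation phi :: "real \<Rightarrow> real" where "phi \<equiv> std_normal_density"

lemma interval_integrable_std_normal_density:
  "interval_lebesgue_integrable lborel a b std_normal_density"
  unfolding interval_lebesgue_integrable_def set_integrable_def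
  using integrable_mult_indicator[of "einterval a b" lborel std_normal_density]
    integrable_mult_indicator[of "einterval b a" lborel std_normal_density]
  by simp

lemma Phi_eq_interval_integral: "Phi x = (LBINT y=-\<infinity>..ereal x. phi y)"
proof -
  have "(LBINT y=-\<infinity>..ereal x. phi y) = (LBINT y:{..<x}. phi y)"
    by (simp add: interval_lebesgue_integral_def einterval_def lessThan_def)
  also have "\<dots> = Phi x"
    unfolding Phi_def by (rule set_integral_discrete_difference[where X="{x}"]) auto
  finally show ?thesis by simp
qed

lemma Phi_has_real_derivative: "(Phi has_real_derivative phi x) (at x)"
proof -
  let ?F = "\<lambda>u. LBINT y=ereal 0..u. phi y"
  have "Phi = (\<lambda>u. Phi 0 + ?F u)"
    unfolding Phi_eq_interval_integral zero_ereal_def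
    by (intro ext interval_integral_sum[symmetric] interval_integrable_std_normal_density)
  moreover have "(?F has_vector_derivative phi x) (at x within {min 0 x - 1..max 0 x + 1})"
    by (rule interval_integral_FTC2) (auto intro!: continuous_intros simp: std_normal_density_def)
  then have "(?F has_vector_derivative phi x) (at x)"
    by (subst (asm) at_within_interior[where x=x]) auto
  then have "((\<lambda>u. Phi 0 + ?F u) has_real_derivative phi x) (at x)"
    by (auto intro!: derivative_eq_intros simp: has_real_derivative_iff_has_vector_derivative)
  ultimately show ?thesis
    by simp
qed

lemma std_normal_density_minus: "phi (- y) = phi y"
  by (simp add: std_normal_density_def)

lemma Phi_add_Phi_minus: "Phi x + Phi (- x) = 1"
proof -
  have "Phi (- x) = (LBINT y=ereal x..\<infinity>. phi y)"
    unfolding Phi_eq_interval_integral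
    by (subst interval_integral_reflect)
       (simp only: std_normal_density_minus ereal_uminus_uminus uminus_ereal.simps)
  then have "Phi x + Phi (- x) = (LBINT y=-\<infinity>..\<infinity>. phi y)"
    unfolding Phi_eq_interval_integral
    by (simp add: interval_integral_sum interval_integrable_std_normal_density)
  also have "\<dots> = 1"
    by (simp add: interval_lebesgue_integral_def einterval_def set_lebesgue_integral_def)
  finally show ?thesis .
qed

lemma Phi_0: "Phi 0 = 1/2"
  using Phi_add_Phi_minus[of 0] by simp

lemma std_normal_density_has_real_derivative: "(phi has_real_derivative - x * phi x) (at x)"
  unfolding std_normal_density_def by (auto intro!: derivative_eq_intros simp: field_simps)

lemma std_normal_density_chain [derivative_intros]:
  "(g has_real_derivative g') (at x within S) \<Longrightarrow>
    ((\<lambda>x. phi (g x)) has_real_derivative - g x * phi (g x) * g') (at x within S)"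
  by (rule DERIV_chain2[OF std_normal_density_has_real_derivative])

lemma Phi_chain [derivative_intros]:
  "(g has_real_derivative g') (at x within S) \<Longrightarrow>
    ((\<lambda>x. Phi (g x)) has_real_derivative phi (g x) * g') (at x within S)"
  by (rule DERIV_chain2[OF Phi_has_real_derivative])

lemma isCont_Phi [continuous_intros]: "isCont g x \<Longrightarrow> isCont (\<lambda>x. Phi (g x)) x"
  by (rule isCont_o2[OF _ DERIV_isCont[OF Phi_has_real_derivative]])

lemma std_normal_density_le: "phi x \<le> 1/2"
proof -
  have "2 \<le> sqrt (2 * pi)"
    using pi_gt3 by (simp add: real_le_rsqrt)
  then have "exp (- x\<^sup>2 / 2) / sqrt (2 * pi) \<le> 1 / 2"
    using order_trans[of "exp (- x\<^sup>2 / 2)" 1 "sqrt (2 * pi) / 2"] by (simp add: divide_le_eq)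
  then show ?thesis
    unfolding std_normal_density_def by simp
qed

lemma Phi_ge: assumes "0 \<le> x" shows "1/2 + x * phi x \<le> Phi x"
proof (cases "x = 0")
  case True
  then show ?thesis by (simp add: Phi_0)
next
  case False
  let ?h = "\<lambda>x. Phi x - x * phi x"
  have "\<And>y. (?h has_real_derivative y\<^sup>2 * phi y) (at y)"
    by (auto intro!: derivative_eq_intros simp: power2_eq_square algebra_simps)
  then obtain z where "?h x - ?h 0 = x * (z\<^sup>2 * phi z)"
    using MVT2[of 0 x ?h "\<lambda>y. y\<^sup>2 * phi y"] False assms by force
  moreover have "0 \<le> x * (z\<^sup>2 * phi z)"
    using assms by simp
  ultimately show ?thesis by (simp add: Phi_0)
qed

lemma Phi_ge_half: assumes "0 \<le> x" shows "1/2 \<le> Phi x"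
proof -
  have "0 \<le> x * phi x"
    using assms by simp
  then show ?thesis
    using Phi_ge[OF assms] by linarith
qed

text \<open>Dividing the defining equation of \<open>B\<^sup>*\<close> by \<open>\<surd>(2\<pi>) exp(B\<^sup>2/2)\<close> gives \<open>b_fun B = 0\<close>.\<close>
definition b_fun :: "real \<Rightarrow> real" where
  "b_fun B = (1 - B\<^sup>2) * Phi B - B * phi B"

lemma b_fun_has_real_derivative: "(b_fun has_real_derivative - 2 * B * Phi B) (at B)"
  unfolding b_fun_def by (auto intro!: derivative_eq_intros simp: power2_eq_square algebra_simps)

lemma b_fun_strict_antimono: assumes "0 \<le> x" "x < y" shows "b_fun y < b_fun x"
proof -
  obtain z where z: "x < z" "z < y" "b_fun y - b_fun x = (y - x) * (- 2 * z * Phi z)"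
    using MVT2[of x y b_fun "\<lambda>B. - 2 * B * Phi B"] b_fun_has_real_derivative assms by blast
  have "0 < (y - x) * (z * Phi z)"
    using z assms Phi_ge_half[of z] by (intro mult_pos_pos) auto
  then show ?thesis
    using z(3) by (simp add: algebra_simps)
qed

lemma B_equation_iff_b_fun:
  "sqrt (2*pi) * (1 - B\<^sup>2) * exp (B\<^sup>2/2) * Phi B = B \<longleftrightarrow> b_fun B = 0"
proof -
  have "sqrt (2*pi) * exp (B\<^sup>2/2) * phi B = 1"
    unfolding std_normal_density_def by (simp add: exp_minus field_simps)
  then have "sqrt (2*pi) * (1 - B\<^sup>2) * exp (B\<^sup>2/2) * Phi B - B = sqrt (2*pi) * exp (B\<^sup>2/2) * b_fun B"
    unfolding b_fun_def by (simp add: algebra_simps)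
  then show ?thesis
    by (smt (verit) exp_gt_zero mult_eq_0_iff real_sqrt_gt_0_iff pi_gt_zero)
qed

lemma B_star_bounds: "0 < B_star \<and> 1/2 < B_star\<^sup>2 \<and> B_star \<le> 1"
proof -
  define r :: real where "r = 71/100"
    \<comment> \<open>\<open>r\<^sup>2 > 1/2\<close>, yet \<open>b_fun r > 0\<close> already follows from \<open>\<Phi> r \<ge> 1/2 + r \<phi> r\<close> and \<open>\<phi> \<le> 1/2\<close>\<close>
  have "b_fun 1 < 0"
    unfolding b_fun_def using normal_density_pos[of 1 0 1] by simp
  moreover have "0 < b_fun r"
  proof -
    have "(1 - r\<^sup>2) * (1/2 + r * phi r) \<le> (1 - r\<^sup>2) * Phi r"
      using Phi_ge[of r] by (intro mult_left_mono) (auto simp: r_def power2_eq_square)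
    moreover have "r^3 * phi r \<le> r^3 * (1/2)"
      using std_normal_density_le[of r] by (intro mult_left_mono) (auto simp: r_def)
    ultimately show ?thesis
      unfolding b_fun_def by (simp add: r_def power2_eq_square power3_eq_cube algebra_simps)
  qed
  moreover have "\<forall>x. r \<le> x \<and> x \<le> 1 \<longrightarrow> isCont b_fun x"
    using b_fun_has_real_derivative DERIV_isCont by blast
  ultimately obtain B where B: "r \<le> B" "B \<le> 1" "b_fun B = 0"
    using IVT2[of b_fun 1 0 r] by (force simp: r_def)
  have "B \<noteq> r"
    using \<open>0 < b_fun r\<close> B(3) by auto
  have "0 < B"
    using B(1) by (simp add: r_def)
  have "B_star = B"
    unfolding B_star_def
  proof (rule the_equality)
    fix B' assume "0 < B' \<and> sqrt (2*pi) * (1 - B'\<^sup>2) * exp (B'\<^sup>2/2) * Phi B' = B'"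
    then show "B' = B"
      using b_fun_strict_antimono[of B' B] b_fun_strict_antimono[of B B'] \<open>0 < B\<close> B(3)
      by (cases B' B rule: linorder_cases) (auto simp: B_equation_iff_b_fun)
  qed (use \<open>0 < B\<close> B(3) B_equation_iff_b_fun in blast)
  moreover have "r\<^sup>2 < B\<^sup>2"
    using \<open>B \<noteq> r\<close> B(1) by (intro power_strict_mono) (auto simp: r_def)
  ultimately show ?thesis
    using B \<open>0 < B\<close> by (simp add: r_def power2_eq_square)
qed

definition c_fun :: "real \<Rightarrow> real" where
  "c_fun C = 1 - (1 - C\<^sup>2) * Phi (- C) - C * phi C"

lemma u_eq_c_fun: "u C = c_fun C - B_star\<^sup>2"
  unfolding u_def c_fun_def std_normal_density_def by (simp add: field_simps)

lemma c_fun_has_real_derivative: "(c_fun has_real_derivative 2 * C * Phi (- C)) (at C)"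
  unfolding c_fun_def
  by (auto intro!: derivative_eq_intros simp: power2_eq_square algebra_simps std_normal_density_minus)

lemma c_fun_strict_antimono: assumes "y \<le> 0" "x < y" shows "c_fun y < c_fun x"
proof -
  obtain z where z: "x < z" "z < y" "c_fun y - c_fun x = (y - x) * (2 * z * Phi (- z))"
    using MVT2[of x y c_fun "\<lambda>C. 2 * C * Phi (- C)"] c_fun_has_real_derivative assms by blast
  have "0 < (y - x) * (- z * Phi (- z))"
    using z assms Phi_ge_half[of "- z"] by (intro mult_pos_pos) auto
  then show ?thesis
    using z(3) by (simp add: algebra_simps)
qed

lemma C_star_root: "C_star < 0 \<and> u C_star = 0"
proof -
  have B: "1/2 < B_star\<^sup>2" "B_star\<^sup>2 \<le> 1"
    using B_star_bounds power_mono[of B_star 1 2] by auto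
  have "u 0 < 0"
    unfolding u_eq_c_fun c_fun_def using B by (simp add: Phi_0)
  moreover have "c_fun (- 2) = 1 + 3 * Phi 2 + 2 * phi 2"
    unfolding c_fun_def by (simp add: std_normal_density_minus)
  then have "0 < u (- 2)"
    unfolding u_eq_c_fun using B Phi_ge_half[of 2] normal_density_nonneg[of 0 1 2] by linarith
  moreover have "\<forall>x. - 2 \<le> x \<and> x \<le> 0 \<longrightarrow> isCont u x"
    unfolding u_eq_c_fun[abs_def]
    using c_fun_has_real_derivative DERIV_isCont by (auto intro!: continuous_intros)
  ultimately obtain C where C: "- 2 \<le> C" "C \<le> 0" "u C = 0"
    using IVT2[of u 0 0 "- 2"] by force
  then have "C < 0"
    using \<open>u 0 < 0\<close> by (cases "C = 0") auto
  have "C_star = C"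
    unfolding C_star_def
  proof (rule the_equality)
    fix C' assume "C' < 0 \<and> u C' = 0"
    then show "C' = C"
      using c_fun_strict_antimono[of C C'] c_fun_strict_antimono[of C' C] C \<open>C < 0\<close>
      by (cases C' C rule: linorder_cases) (auto simp: u_eq_c_fun)
  qed (use \<open>C < 0\<close> C in blast)
  then show ?thesis
    using \<open>C < 0\<close> C by simp
qed

definition psi :: "real \<Rightarrow> real" where
  "psi z = sqrt (2 * pi) * exp (z\<^sup>2 / 2)"

lemma psi_mult_std_normal_density: "psi z * phi z = 1"
  unfolding psi_def std_normal_density_def by (simp add: exp_minus field_simps)

lemma psi_has_real_derivative [derivative_intros]:
  "(g has_real_derivative g') (at x within S) \<Longrightarrow>
    ((\<lambda>x. psi (g x)) has_real_derivative g x * psi (g x) * g') (at x within S)"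
  unfolding psi_def by (auto intro!: derivative_eq_intros)

lemma isCont_psi [continuous_intros]: "isCont g x \<Longrightarrow> isCont (\<lambda>x. psi (g x)) x"
  unfolding psi_def by (auto intro!: continuous_intros)

definition V_profile :: "real \<Rightarrow> real" where
  "V_profile z = v C_star * psi z * Phi (- z)"

definition f_profile :: "real \<Rightarrow> real" where
  "f_profile z = (1 - B_star\<^sup>2) * psi z * Phi z - z"

lemma V_profile_has_real_derivative:
  "(V_profile has_real_derivative v C_star * (z * psi z * Phi (- z) - 1)) (at z)"
  unfolding V_profile_def
  by (auto intro!: derivative_eq_intros
      simp: algebra_simps std_normal_density_minus psi_mult_std_normal_density)

lemma f_profile_has_real_derivative:
  "(f_profile has_real_derivative (1 - B_star\<^sup>2) * (z * psi z * Phi z + 1) - 1) (at z)"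
  unfolding f_profile_def
  by (auto intro!: derivative_eq_intros simp: algebra_simps psi_mult_std_normal_density)

lemma smooth_fit_identity:
  assumes "C \<le> 0" "u C = 0"
  shows "v C * (C * psi C * Phi (- C) - 1) = (1 - B_star\<^sup>2) * (C * psi C * Phi C + 1) - 1"
proof -
  define k where "k = 1 - B_star\<^sup>2"
  have P: "0 < Phi (- C)"
    using Phi_ge_half[of "- C"] assms by simp
  have exp_phi: "C * exp (- (C\<^sup>2) / 2) / sqrt (2 * pi) = C * phi C"
    "C / sqrt (2 * pi) * exp (- (C\<^sup>2) / 2) = C * phi C"
    by (simp_all add: std_normal_density_def)
  have v_times_Phi: "v C * Phi (- C) = k * Phi C - C * phi C"
    using P unfolding v_def exp_phi k_def by simp
  have "k = (1 - C\<^sup>2) * Phi (- C) + C * phi C"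
    using assms(2) unfolding u_def exp_phi k_def by simp
  moreover have "Phi C = 1 - Phi (- C)"
    using Phi_add_Phi_minus[of C] by simp
  then have "v C * Phi (- C) = k * (1 - Phi (- C)) - C * phi C"
    using v_times_Phi by simp
  ultimately have "v C * Phi (- C) = (1 - C\<^sup>2 - k) * Phi (- C)"
    by (simp only: algebra_simps)
  then have v_eq: "v C = 1 - C\<^sup>2 - k"
    using P by simp
  have "v C * (C * psi C * Phi (- C) - 1) = C * psi C * (v C * Phi (- C)) - v C"
    by (simp add: algebra_simps)
  also have "\<dots> = k * C * psi C * Phi C - C\<^sup>2 * (psi C * phi C) - v C"
    unfolding v_times_Phi by (simp add: algebra_simps power2_eq_square)
  also have "\<dots> = k * (C * psi C * Phi C + 1) - 1"
    unfolding psi_mult_std_normal_density v_eq by (simp add: algebra_simps)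
  finally show ?thesis
    unfolding k_def .
qed

lemma tendsto_deriv_rescaled:
  fixes g g' h :: "real \<Rightarrow> real"
  assumes "0 < s" "open S"
    and h: "\<And>y. y \<in> S \<Longrightarrow> h y = s * g (y / s)"
    and g: "\<And>z. (g has_real_derivative g' z) (at z)"
    and "isCont g' (a / s)" "F \<le> at a" "eventually (\<lambda>y. y \<in> S) F"
  shows "((\<lambda>x. deriv h x) \<longlongrightarrow> g' (a / s)) F"
proof -
  have "deriv h y = g' (y / s)" if "y \<in> S" for y
  proof (rule DERIV_imp_deriv, rule has_field_derivative_transform_within_open)
    have "((\<lambda>y. g (y / s)) has_real_derivative g' (y / s) * (1 / s)) (at y)"
      by (rule DERIV_chain2[OF g]) (use \<open>0 < s\<close> in \<open>auto intro!: derivative_eq_intros\<close>)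
    from DERIV_cmult[OF this, of s] show "((\<lambda>y. s * g (y / s)) has_real_derivative g' (y / s)) (at y)"
      using \<open>0 < s\<close> by simp
  qed (use that h \<open>open S\<close> in auto)
  then have "eventually (\<lambda>y. g' (y / s) = deriv h y) F"
    using assms(7) by (auto elim: eventually_mono)
  moreover have "((\<lambda>y. y / s) \<longlongrightarrow> a / s) (at a)"
    by (intro tendsto_divide tendsto_ident_at tendsto_const) (use \<open>0 < s\<close> in simp)
  then have "((\<lambda>y. g' (y / s)) \<longlongrightarrow> g' (a / s)) F"
    by (intro tendsto_mono[OF \<open>F \<le> at a\<close>] isCont_tendsto_compose[OF \<open>isCont g' (a / s)\<close>])
  ultimately show ?thesis
    by (rule Lim_transform_eventually[rotated])
qed

lemma psi_rescaled: "t < 1 \<Longrightarrow> psi (x / sqrt (1 - t)) = sqrt (2 * pi) * exp (x\<^sup>2 / (2 * (1 - t)))"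
  unfolding psi_def by (simp add: power_divide)

lemma V_star_rescaled:
  assumes "t < 1" "C_star * sqrt (1 - t) < x"
  shows "V_star t x = sqrt (1 - t) * V_profile (x / sqrt (1 - t))"
  using assms unfolding V_star_def V_profile_def psi_rescaled[OF assms(1)] by (simp add: algebra_simps)

lemma f_rescaled:
  assumes "t < 1" "x < B_star * sqrt (1 - t)"
  shows "f t x = sqrt (1 - t) * f_profile (x / sqrt (1 - t))"
  using assms unfolding f_def U_def f_profile_def psi_rescaled[OF assms(1)] real_sqrt_mult
  by (simp add: algebra_simps)

lemma tendsto_deriv_V_star:
  assumes "t < 1"
  shows "((\<lambda>x. deriv (V_star t) x) \<longlongrightarrow> v C_star * (C_star * psi C_star * Phi (- C_star) - 1))
    (at_right (C_star * sqrt (1 - t)))"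
proof -
  define s where "s = sqrt (1 - t)"
  have "0 < s"
    using assms by (simp add: s_def)
  have "((\<lambda>x. deriv (V_star t) x) \<longlongrightarrow> v C_star * (C_star * s / s * psi (C_star * s / s) *
      Phi (- (C_star * s / s)) - 1)) (at_right (C_star * s))"
  proof (rule tendsto_deriv_rescaled[OF \<open>0 < s\<close> open_greaterThan _ V_profile_has_real_derivative])
    show "V_star t y = s * V_profile (y / s)" if "y \<in> {C_star * s<..}" for y
      using that assms V_star_rescaled unfolding s_def by simp
    show "isCont (\<lambda>z. v C_star * (z * psi z * Phi (- z) - 1)) (C_star * s / s)"
      by (intro continuous_intros)
  qed (simp_all add: at_le eventually_at_filter)
  then show ?thesis
    using \<open>0 < s\<close> unfolding s_def by simp
qed

lemma tendsto_deriv_f: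
  assumes "t < 1"
  shows "((\<lambda>x. deriv (f t) x) \<longlongrightarrow> (1 - B_star\<^sup>2) * (C_star * psi C_star * Phi C_star + 1) - 1)
    (at_left (C_star * sqrt (1 - t)))"
proof -
  define s where "s = sqrt (1 - t)"
  have "0 < s"
    using assms by (simp add: s_def)
  have "((\<lambda>x. deriv (f t) x) \<longlongrightarrow> (1 - B_star\<^sup>2) * (C_star * s / s * psi (C_star * s / s) *
      Phi (C_star * s / s) + 1) - 1) (at_left (C_star * s))"
  proof (rule tendsto_deriv_rescaled[OF \<open>0 < s\<close> open_lessThan _ f_profile_has_real_derivative])
    have "C_star * s < B_star * s"
      using \<open>0 < s\<close> B_star_bounds C_star_root by simp
    then show "f t y = s * f_profile (y / s)" if "y \<in> {..<C_star * s}" for y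
      using f_rescaled[of t y, folded s_def] assms that by simp
    show "isCont (\<lambda>z. (1 - B_star\<^sup>2) * (z * psi z * Phi z + 1) - 1) (C_star * s / s)"
      by (intro continuous_intros)
  qed (simp_all add: at_le eventually_at_filter)
  then show ?thesis
    using \<open>0 < s\<close> unfolding s_def by simp
qed

theorem lemma3p3:
  fixes t :: real
  assumes "0 \<le> t" and "t < 1"
  shows "\<exists>L. ((\<lambda>x. deriv (\<lambda>y. V_star t y) x) \<longlongrightarrow> L) (at_right (C_star * sqrt (1 - t)))
           \<and> ((\<lambda>x. deriv (\<lambda>y. f t y) x) \<longlongrightarrow> L) (at_left (C_star * sqrt (1 - t)))"
  using tendsto_deriv_V_star[OF assms(2)] tendsto_deriv_f[OF assms(2)]
    smooth_fit_identity[of C_star] C_star_root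
  by auto

end
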